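(* Let $N$ be a surface in a three-dimensional contact manifold with subriemannian structure, let $(v_1,v_2)$ be an adapted frame near a regular point of $N$, let $v_0$ be the Reeb field, and define functions $a_{ij}^k$ by $[v_i,v_j]=\sum_{k=0}^2a_{ij}^kv_k$ for $i,j\in\{0,1,2\}$. Then on the regular points of $N$ where the frame is defined, the curvature of transversality satisfies \[ \mathfrak r=-a_{01}^2-\mathfrak a\,a_{12}^2 . \]
   Context: A three-dimensional contact manifold $M$ carries a rank-2 distribution $\Delta$ (kernel of a contact form) with an inner product on $\Delta$. Fix the contact form $\alpha_0$ with $\ker\alpha_0=\Delta$ normalized so that $d\alpha_0(w_1,w_2)=\pm1$ for orthonormal $w_1,w_2\in\Delta_x$, with convention $d\alpha(X,Y)=X\alpha(Y)-Y\alpha(X)-\alpha([X,Y])$; the Reeb field $v_0$ satisfies $\alpha_0(v_0)=1$, $d\alpha_0(v_0,\cdot)=0$. For a surface $N\subset M$, $x\in N$ is regular if $T_xN\neq\Delta_x$. An adapted frame near a regular point is a pair of local orthonormal sections $v_1,v_2$ of $\Delta$ with $v_1$ tangent to $N$ along $N$ and $d\alpha_0(v_1,v_2)=1$. The degree of transversality (DOT) $\mathfrak a$ is the function on regular points with $v_0-\mathfrak a v_2\in TN$. The curvature of transversality (COT) is $\mathfrak r=v_1\mathfrak a-\mathfrak a^2$. *)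

theory Defs
  imports "HOL-Analysis.Analysis"
begin

text \<open>Everything is local, so we work in a coordinate chart: an open set U of real^3.
  Vector fields are maps real^3 => real^3, a 1-form alpha is represented by its
  coefficient covector field A (alpha_x(w) = A x \<bullet> w).\<close>

coinductive smooth_on :: "(real^3) set \<Rightarrow> (real^3 \<Rightarrow> 'b::real_normed_vector) \<Rightarrow> bool"
  for U where
  "f differentiable_on U \<Longrightarrow> (\<forall>v. smooth_on U (\<lambda>x. frechet_derivative f (at x) v))
     \<Longrightarrow> smooth_on U f"

text \<open>Lie bracket [X,Y] = DY.X - DX.Y, so that [X,Y]f = X(Yf) - Y(Xf).\<close>
definition lie :: "(real^3 \<Rightarrow> real^3) \<Rightarrow> (real^3 \<Rightarrow> real^3) \<Rightarrow> real^3 \<Rightarrow> real^3" where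
  "lie X Y x = frechet_derivative Y (at x) (X x) - frechet_derivative X (at x) (Y x)"

text \<open>Exterior derivative of alpha = A.dx at x, convention
  d alpha(X,Y) = X alpha(Y) - Y alpha(X) - alpha([X,Y]).\<close>
definition dalpha :: "(real^3 \<Rightarrow> real^3) \<Rightarrow> real^3 \<Rightarrow> real^3 \<Rightarrow> real^3 \<Rightarrow> real" where
  "dalpha A x u w = (frechet_derivative A (at x) u) \<bullet> w - (frechet_derivative A (at x) w) \<bullet> u"

definition distr :: "(real^3 \<Rightarrow> real^3) \<Rightarrow> real^3 \<Rightarrow> (real^3) set" where
  "distr A x = {w. A x \<bullet> w = 0}"

definition contact_form :: "(real^3) set \<Rightarrow> (real^3 \<Rightarrow> real^3) \<Rightarrow> bool" where
  "contact_form U A \<longleftrightarrow> open U \<and> smooth_on U A \<and>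
     (\<forall>x\<in>U. A x \<noteq> 0 \<and>
        (\<forall>u\<in>distr A x. u \<noteq> 0 \<longrightarrow> (\<exists>w\<in>distr A x. dalpha A x u w \<noteq> 0)))"

definition sr_metric :: "(real^3) set \<Rightarrow> (real^3 \<Rightarrow> real^3) \<Rightarrow> (real^3 \<Rightarrow> real^3 \<Rightarrow> real^3 \<Rightarrow> real) \<Rightarrow> bool" where
  "sr_metric U A g \<longleftrightarrow> (\<forall>u w. smooth_on U (\<lambda>x. g x u w)) \<and>
     (\<forall>x\<in>U. bilinear (g x) \<and>
        (\<forall>u\<in>distr A x. \<forall>w\<in>distr A x. g x u w = g x w u) \<and>
        (\<forall>u\<in>distr A x. u \<noteq> 0 \<longrightarrow> g x u u > 0))"

definition normalized :: "(real^3) set \<Rightarrow> (real^3 \<Rightarrow> real^3) \<Rightarrow> (real^3 \<Rightarrow> real^3 \<Rightarrow> real^3 \<Rightarrow> real) \<Rightarrow> bool" where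
  "normalized U A g \<longleftrightarrow> (\<forall>x\<in>U. \<forall>w1\<in>distr A x. \<forall>w2\<in>distr A x.
      g x w1 w1 = 1 \<and> g x w2 w2 = 1 \<and> g x w1 w2 = 0 \<longrightarrow> \<bar>dalpha A x w1 w2\<bar> = 1)"

definition reeb :: "(real^3) set \<Rightarrow> (real^3 \<Rightarrow> real^3) \<Rightarrow> (real^3 \<Rightarrow> real^3) \<Rightarrow> bool" where
  "reeb U A v0 \<longleftrightarrow> smooth_on U v0 \<and>
     (\<forall>x\<in>U. A x \<bullet> v0 x = 1 \<and> (\<forall>w. dalpha A x (v0 x) w = 0))"

definition surface :: "(real^3) set \<Rightarrow> (real^3) set \<Rightarrow> bool" where
  "surface U N \<longleftrightarrow> N \<subseteq> U \<and> (\<forall>p\<in>N. \<exists>W (F::real^3 \<Rightarrow> real). open W \<and> p \<in> W \<and>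
      smooth_on W F \<and> (\<forall>x\<in>W. frechet_derivative F (at x) \<noteq> (\<lambda>_. 0)) \<and>
      N \<inter> W = {x\<in>W. F x = 0})"

definition tangent_space :: "(real^3) set \<Rightarrow> real^3 \<Rightarrow> (real^3) set" where
  "tangent_space N x = {v. \<exists>(\<gamma>::real \<Rightarrow> real^3) e. e > 0 \<and> \<gamma> 0 = x \<and>
      (\<forall>t\<in>{-e<..<e}. \<gamma> t \<in> N) \<and> (\<gamma> has_vector_derivative v) (at 0)}"

definition regular_pt :: "(real^3 \<Rightarrow> real^3) \<Rightarrow> (real^3) set \<Rightarrow> real^3 \<Rightarrow> bool" where
  "regular_pt A N x \<longleftrightarrow> x \<in> N \<and> tangent_space N x \<noteq> distr A x"

definition has_deriv_along :: "(real^3) set \<Rightarrow> (real^3 \<Rightarrow> real) \<Rightarrow> real^3 \<Rightarrow> real^3 \<Rightarrow> real \<Rightarrow> bool" where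
  "has_deriv_along N f x v d \<longleftrightarrow> (\<forall>(\<gamma>::real \<Rightarrow> real^3) e. e > 0 \<and> \<gamma> 0 = x \<and>
      (\<forall>t\<in>{-e<..<e}. \<gamma> t \<in> N) \<and> (\<gamma> has_vector_derivative v) (at 0) \<longrightarrow>
      ((f \<circ> \<gamma>) has_real_derivative d) (at 0))"

definition deriv_along :: "(real^3) set \<Rightarrow> (real^3 \<Rightarrow> real) \<Rightarrow> real^3 \<Rightarrow> real^3 \<Rightarrow> real" where
  "deriv_along N f x v = (THE d. has_deriv_along N f x v d)"

definition adapted_frame :: "(real^3) set \<Rightarrow> (real^3 \<Rightarrow> real^3) \<Rightarrow> (real^3 \<Rightarrow> real^3 \<Rightarrow> real^3 \<Rightarrow> real)
     \<Rightarrow> (real^3) set \<Rightarrow> (real^3) set \<Rightarrow> (real^3 \<Rightarrow> real^3) \<Rightarrow> (real^3 \<Rightarrow> real^3) \<Rightarrow> bool" where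
  "adapted_frame U A g N V v1 v2 \<longleftrightarrow> open V \<and> V \<subseteq> U \<and> smooth_on V v1 \<and> smooth_on V v2 \<and>
     (\<forall>x\<in>V. v1 x \<in> distr A x \<and> v2 x \<in> distr A x \<and>
        g x (v1 x) (v1 x) = 1 \<and> g x (v2 x) (v2 x) = 1 \<and> g x (v1 x) (v2 x) = 0 \<and>
        dalpha A x (v1 x) (v2 x) = 1) \<and>
     (\<forall>x\<in>N \<inter> V. v1 x \<in> tangent_space N x)"

definition DOT :: "(real^3) set \<Rightarrow> (real^3 \<Rightarrow> real^3) \<Rightarrow> (real^3 \<Rightarrow> real^3) \<Rightarrow> real^3 \<Rightarrow> real" where
  "DOT N v0 v2 x = (THE a. v0 x - a *\<^sub>R v2 x \<in> tangent_space N x)"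

definition COT :: "(real^3) set \<Rightarrow> (real^3 \<Rightarrow> real^3) \<Rightarrow> (real^3 \<Rightarrow> real^3) \<Rightarrow> (real^3 \<Rightarrow> real^3) \<Rightarrow> real^3 \<Rightarrow> real" where
  "COT N v0 v1 v2 x = deriv_along N (DOT N v0 v2) x (v1 x) - (DOT N v0 v2 x)\<^sup>2"

end

theory Submission
  imports Defs
begin

text \<open>Near a regular point write \<open>N\<close> as a level set \<open>F = 0\<close> with \<open>dF \<noteq> 0\<close>, so that
  \<open>T N = ker dF\<close> and \<open>P\<^sub>i = dF(v\<^sub>i)\<close> satisfies \<open>P\<^sub>1 = 0\<close> on \<open>N\<close>, \<open>P\<^sub>2 \<noteq> 0\<close> and \<open>\<aa> = P\<^sub>0 / P\<^sub>2\<close>.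
  Differentiating \<open>\<aa>\<close> along \<open>v\<^sub>1\<close> and using that \<open>v\<^sub>1 P\<^sub>1 = \<aa> \<cdot> v\<^sub>2 P\<^sub>1\<close> (as \<open>v\<^sub>0 - \<aa> v\<^sub>2\<close> is
  tangent), everything reduces to \<open>v\<^sub>i P\<^sub>j - v\<^sub>j P\<^sub>i = dF[v\<^sub>i,v\<^sub>j]\<close>, which holds by the symmetry of
  the Hessian of \<open>F\<close>. The brackets are then expanded in the frame; their \<open>v\<^sub>0\<close>-components are
  \<open>-d\<alpha>\<^sub>0(v\<^sub>i,v\<^sub>j)\<close>.\<close>

lemma smooth_on_differentiable_on: "smooth_on U f \<Longrightarrow> f differentiable_on U"
  by (erule smooth_on.cases) simp

lemma smooth_on_frechet_derivative:
  "smooth_on U f \<Longrightarrow> smooth_on U (\<lambda>x. frechet_derivative f (at x) v)"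
  by (erule smooth_on.cases) simp

lemma smooth_on_has_derivative:
  "smooth_on U f \<Longrightarrow> open U \<Longrightarrow> x \<in> U \<Longrightarrow> (f has_derivative frechet_derivative f (at x)) (at x)"
  using smooth_on_differentiable_on differentiable_on_eq_differentiable_at frechet_derivative_works
  by blast

lemma smooth_on_differentiable_at:
  "smooth_on U f \<Longrightarrow> open U \<Longrightarrow> x \<in> U \<Longrightarrow> f differentiable (at x)"
  using smooth_on_differentiable_on differentiable_on_eq_differentiable_at by blast

lemma smooth_on_linear_frechet_derivative:
  "smooth_on U f \<Longrightarrow> open U \<Longrightarrow> x \<in> U \<Longrightarrow> linear (frechet_derivative f (at x))"
  using smooth_on_has_derivative has_derivative_linear by blast

lemma smooth_on_continuous_on: "smooth_on U f \<Longrightarrow> open U \<Longrightarrow> continuous_on U f"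
  by (meson differentiable_imp_continuous_on smooth_on_differentiable_on)

lemma has_real_derivative_along_line:
  fixes g :: "'a::real_normed_vector \<Rightarrow> real"
  assumes "(g has_derivative g') (at (x + t *\<^sub>R u))"
  shows "((\<lambda>\<tau>. g (x + \<tau> *\<^sub>R u)) has_real_derivative g' u) (at t)"
proof -
  have "((\<lambda>\<tau>. x + \<tau> *\<^sub>R u) has_derivative (\<lambda>h. h *\<^sub>R u)) (at t)"
    by (auto intro!: derivative_eq_intros)
  from has_derivative_compose[OF this assms]
  have "((\<lambda>\<tau>. g (x + \<tau> *\<^sub>R u)) has_derivative (\<lambda>h. g' (h *\<^sub>R u))) (at t)" .
  moreover have "(\<lambda>h. g' (h *\<^sub>R u)) = (*) (g' u)"
    using linear_scale[OF has_derivative_linear[OF assms]] by (auto simp: fun_eq_iff)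
  ultimately show ?thesis by (simp add: has_field_derivative_def)
qed

lemma second_difference_mean_value:
  fixes F :: "real^3 \<Rightarrow> real"
  assumes F: "smooth_on W F" "open W" and s: "s > 0"
    and inW: "\<And>\<sigma> \<tau>. \<sigma> \<in> {0..s} \<Longrightarrow> \<tau> \<in> {0..s} \<Longrightarrow> x + \<sigma> *\<^sub>R u + \<tau> *\<^sub>R w \<in> W"
  obtains \<sigma> \<tau> where "\<sigma> \<in> {0..s}" "\<tau> \<in> {0..s}"
    "F (x + s *\<^sub>R u + s *\<^sub>R w) - F (x + s *\<^sub>R u) - F (x + s *\<^sub>R w) + F x
     = s\<^sup>2 * frechet_derivative (\<lambda>y. frechet_derivative F (at y) u) (at (x + \<sigma> *\<^sub>R u + \<tau> *\<^sub>R w)) w"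
proof -
  define p where "p = (\<lambda>y. frechet_derivative F (at y) u)"
  have p: "smooth_on W p" unfolding p_def using F(1) by (rule smooth_on_frechet_derivative)
  define \<phi> where "\<phi> = (\<lambda>\<sigma>. F ((x + s *\<^sub>R w) + \<sigma> *\<^sub>R u) - F (x + \<sigma> *\<^sub>R u))"
  have "(\<phi> has_real_derivative (p ((x + s *\<^sub>R w) + \<sigma> *\<^sub>R u) - p (x + \<sigma> *\<^sub>R u))) (at \<sigma>)"
    if "0 \<le> \<sigma>" "\<sigma> \<le> s" for \<sigma>
  proof -
    have "(x + s *\<^sub>R w) + \<sigma> *\<^sub>R u \<in> W" "x + \<sigma> *\<^sub>R u \<in> W"
      using inW[of \<sigma> s] inW[of \<sigma> 0] that s by (simp_all add: algebra_simps)
    then show ?thesis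
      unfolding \<phi>_def p_def by (intro DERIV_diff has_real_derivative_along_line smooth_on_has_derivative[OF F])
  qed
  from MVT2[OF s this] obtain \<sigma> where \<sigma>: "0 < \<sigma>" "\<sigma> < s"
    "\<phi> s - \<phi> 0 = s * (p ((x + s *\<^sub>R w) + \<sigma> *\<^sub>R u) - p (x + \<sigma> *\<^sub>R u))" by auto
  define \<psi> where "\<psi> = (\<lambda>\<tau>. p ((x + \<sigma> *\<^sub>R u) + \<tau> *\<^sub>R w))"
  have "(\<psi> has_real_derivative frechet_derivative p (at (x + \<sigma> *\<^sub>R u + \<tau> *\<^sub>R w)) w) (at \<tau>)"
    if "0 \<le> \<tau>" "\<tau> \<le> s" for \<tau>
    unfolding \<psi>_def using inW[of \<sigma> \<tau>] that \<sigma>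
    by (intro has_real_derivative_along_line smooth_on_has_derivative[OF p F(2)]) simp
  from MVT2[OF s this] obtain \<tau> where \<tau>: "0 < \<tau>" "\<tau> < s"
    "\<psi> s - \<psi> 0 = s * frechet_derivative p (at (x + \<sigma> *\<^sub>R u + \<tau> *\<^sub>R w)) w" by auto
  have "F (x + s *\<^sub>R u + s *\<^sub>R w) - F (x + s *\<^sub>R u) - F (x + s *\<^sub>R w) + F x = \<phi> s - \<phi> 0"
    unfolding \<phi>_def by (simp add: algebra_simps)
  also have "\<dots> = s * (\<psi> s - \<psi> 0)" using \<sigma>(3) unfolding \<psi>_def by (simp add: algebra_simps)
  also have "\<dots> = s\<^sup>2 * frechet_derivative p (at (x + \<sigma> *\<^sub>R u + \<tau> *\<^sub>R w)) w"
    using \<tau>(3) by (simp add: power2_eq_square)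
  finally show ?thesis using that[of \<sigma> \<tau>] \<sigma> \<tau> unfolding p_def by simp
qed

text \<open>Schwarz's theorem: both mixed second derivatives are limits of the same second difference
  quotient, which by the mean value theorem they attain at points arbitrarily close to \<open>x\<close>.\<close>
lemma frechet_derivative_second_symmetric:
  fixes F :: "real^3 \<Rightarrow> real"
  assumes F: "smooth_on W F" "open W" and x: "x \<in> W"
  shows "frechet_derivative (\<lambda>y. frechet_derivative F (at y) u) (at x) w
       = frechet_derivative (\<lambda>y. frechet_derivative F (at y) w) (at x) u"
    (is "?d1 x = ?d2 x")
proof (rule ccontr)
  assume ne: "?d1 x \<noteq> ?d2 x"
  define e where "e = \<bar>?d1 x - ?d2 x\<bar> / 2"
  have e: "e > 0" using ne by (simp add: e_def)
  have "continuous_on W ?d1" "continuous_on W ?d2"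
    by (intro smooth_on_continuous_on smooth_on_frechet_derivative F)+
  then obtain \<delta>1 \<delta>2 where \<delta>1: "\<delta>1 > 0" "\<forall>y\<in>W. dist y x < \<delta>1 \<longrightarrow> dist (?d1 y) (?d1 x) < e"
    and \<delta>2: "\<delta>2 > 0" "\<forall>y\<in>W. dist y x < \<delta>2 \<longrightarrow> dist (?d2 y) (?d2 x) < e"
    using x e unfolding continuous_on_iff by metis
  obtain r where r: "r > 0" "ball x r \<subseteq> W" using F(2) x open_contains_ball by blast
  define \<delta> where "\<delta> = min r (min \<delta>1 \<delta>2)"
  have \<delta>: "\<delta> > 0" using r \<delta>1 \<delta>2 by (simp add: \<delta>_def)
  have pos: "norm u + norm w + 1 > 0" by (simp add: add_nonneg_pos)
  define s where "s = \<delta> / (norm u + norm w + 1)"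
  have s: "s > 0" using \<delta> pos by (simp add: s_def)
  have near: "dist (x + \<sigma> *\<^sub>R u + \<tau> *\<^sub>R w) x < \<delta>" if "\<sigma> \<in> {0..s}" "\<tau> \<in> {0..s}" for \<sigma> \<tau>
  proof -
    have "dist (x + \<sigma> *\<^sub>R u + \<tau> *\<^sub>R w) x \<le> \<sigma> * norm u + \<tau> * norm w"
      using that norm_triangle_ineq[of "\<sigma> *\<^sub>R u" "\<tau> *\<^sub>R w"] by (simp add: dist_norm)
    also have "\<dots> \<le> s * (norm u + norm w)"
      using that by (simp add: distrib_left add_mono mult_right_mono)
    also have "\<dots> < s * (norm u + norm w + 1)" using s by simp
    also have "\<dots> = \<delta>" unfolding s_def using pos by simp
    finally show ?thesis .
  qed
  have inW: "x + \<sigma> *\<^sub>R u + \<tau> *\<^sub>R w \<in> W" "x + \<tau> *\<^sub>R w + \<sigma> *\<^sub>R u \<in> W"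
    if "\<sigma> \<in> {0..s}" "\<tau> \<in> {0..s}" for \<sigma> \<tau>
    using near[OF that] r \<delta>_def by (auto simp: dist_commute algebra_simps)
  obtain \<sigma>1 \<tau>1 where 1: "\<sigma>1 \<in> {0..s}" "\<tau>1 \<in> {0..s}"
     "F (x + s *\<^sub>R u + s *\<^sub>R w) - F (x + s *\<^sub>R u) - F (x + s *\<^sub>R w) + F x
      = s\<^sup>2 * ?d1 (x + \<sigma>1 *\<^sub>R u + \<tau>1 *\<^sub>R w)"
    using second_difference_mean_value[OF F s inW(1)] by blast
  obtain \<tau>2 \<sigma>2 where 2: "\<tau>2 \<in> {0..s}" "\<sigma>2 \<in> {0..s}"
     "F (x + s *\<^sub>R w + s *\<^sub>R u) - F (x + s *\<^sub>R w) - F (x + s *\<^sub>R u) + F x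
      = s\<^sup>2 * ?d2 (x + \<tau>2 *\<^sub>R w + \<sigma>2 *\<^sub>R u)"
    using second_difference_mean_value[OF F s inW(2)] by blast
  have eq: "?d1 (x + \<sigma>1 *\<^sub>R u + \<tau>1 *\<^sub>R w) = ?d2 (x + \<tau>2 *\<^sub>R w + \<sigma>2 *\<^sub>R u)"
    using 1(3) 2(3) s by (simp add: algebra_simps)
  have "dist (?d1 (x + \<sigma>1 *\<^sub>R u + \<tau>1 *\<^sub>R w)) (?d1 x) < e"
    using \<delta>1(2) inW(1)[OF 1(1,2)] near[OF 1(1,2)] \<delta>_def by auto
  moreover have "dist (?d2 (x + \<tau>2 *\<^sub>R w + \<sigma>2 *\<^sub>R u)) (?d2 x) < e"
    using \<delta>2(2) inW(2)[OF 2(2,1)] near[OF 2(2,1)] \<delta>_def by (auto simp: algebra_simps)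
  ultimately show False using eq unfolding e_def dist_real_def by argo
qed

lemma has_derivative_frechet_pairing:
  fixes F :: "real^3 \<Rightarrow> real"
  assumes F: "smooth_on W F" "open W" and x: "x \<in> W"
    and v: "(v has_derivative v') (at x)"
  shows "((\<lambda>y. frechet_derivative F (at y) (v y)) has_derivative
     (\<lambda>u. frechet_derivative F (at x) (v' u)
          + frechet_derivative (\<lambda>y. frechet_derivative F (at y) (v x)) (at x) u)) (at x)"
proof -
  define e where "e = (\<lambda>j::3. axis j (1::real))"
  define H where "H = (\<lambda>j. frechet_derivative (\<lambda>y. frechet_derivative F (at y) (e j)) (at x))"
  have H: "((\<lambda>y. frechet_derivative F (at y) (e j)) has_derivative H j) (at x)" for j
    unfolding H_def by (rule smooth_on_has_derivative[OF smooth_on_frechet_derivative[OF F(1)] F(2) x])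
  have expand: "frechet_derivative F (at y) w = (\<Sum>j\<in>UNIV. w$j * frechet_derivative F (at y) (e j))"
    if "y \<in> W" for y w
  proof -
    note lin = smooth_on_linear_frechet_derivative[OF F that]
    have "frechet_derivative F (at y) w = frechet_derivative F (at y) (\<Sum>j\<in>UNIV. w$j *\<^sub>R e j)"
      using basis_expansion[of w] by (simp add: e_def scalar_mult_eq_scaleR)
    then show ?thesis by (simp add: linear_sum[OF lin] linear_scale[OF lin])
  qed
  have vj: "((\<lambda>y. v y $ j) has_derivative (\<lambda>u. v' u $ j)) (at x)" for j
    using bounded_linear.has_derivative[OF bounded_linear_vec_nth v] .
  have "((\<lambda>y. \<Sum>j\<in>UNIV. v x $ j * frechet_derivative F (at y) (e j)) has_derivative
       (\<lambda>u. \<Sum>j\<in>UNIV. v x $ j * H j u)) (at x)"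
    by (intro has_derivative_sum has_derivative_mult_right H)
  then have "((\<lambda>y. frechet_derivative F (at y) (v x)) has_derivative
       (\<lambda>u. \<Sum>j\<in>UNIV. v x $ j * H j u)) (at x)"
    by (rule has_derivative_transform_within_open[OF _ F(2) x]) (metis expand)
  then have fixed: "frechet_derivative (\<lambda>y. frechet_derivative F (at y) (v x)) (at x)
      = (\<lambda>u. \<Sum>j\<in>UNIV. v x $ j * H j u)"
    by (rule frechet_derivative_at[symmetric])
  have "((\<lambda>y. \<Sum>j\<in>UNIV. v y $ j * frechet_derivative F (at y) (e j)) has_derivative
       (\<lambda>u. \<Sum>j\<in>UNIV. v x $ j * H j u + v' u $ j * frechet_derivative F (at x) (e j))) (at x)"
    by (intro has_derivative_sum has_derivative_mult vj H)
  then have "((\<lambda>y. frechet_derivative F (at y) (v y)) has_derivative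
       (\<lambda>u. \<Sum>j\<in>UNIV. v x $ j * H j u + v' u $ j * frechet_derivative F (at x) (e j))) (at x)"
    by (rule has_derivative_transform_within_open[OF _ F(2) x]) (metis expand)
  moreover have "(\<lambda>u. \<Sum>j\<in>UNIV. v x $ j * H j u + v' u $ j * frechet_derivative F (at x) (e j))
      = (\<lambda>u. frechet_derivative F (at x) (v' u) + (\<Sum>j\<in>UNIV. v x $ j * H j u))"
    by (rule ext) (simp add: expand[OF x, of "v' _"] sum.distrib)
  ultimately show ?thesis unfolding fixed by simp
qed

lemma frechet_pairing_differentiable:
  fixes F :: "real^3 \<Rightarrow> real"
  assumes "smooth_on W F" "open W" "x \<in> W" "X differentiable (at x)"
  shows "(\<lambda>y. frechet_derivative F (at y) (X y)) differentiable (at x)"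
  using has_derivative_frechet_pairing[OF assms(1-3) frechet_derivative_works[THEN iffD1, OF assms(4)]]
  by (auto simp: differentiable_def)

text \<open>The second derivatives of \<open>F\<close> cancel by symmetry, leaving only the first-order terms
  which make up the bracket.\<close>
lemma frechet_pairing_lie:
  fixes F :: "real^3 \<Rightarrow> real"
  assumes F: "smooth_on W F" "open W" and x: "x \<in> W"
    and XY: "X differentiable (at x)" "Y differentiable (at x)"
  shows "frechet_derivative (\<lambda>y. frechet_derivative F (at y) (Y y)) (at x) (X x)
       - frechet_derivative (\<lambda>y. frechet_derivative F (at y) (X y)) (at x) (Y x)
       = frechet_derivative F (at x) (lie X Y x)"
proof -
  have D: "frechet_derivative (\<lambda>y. frechet_derivative F (at y) (Z y)) (at x)
     = (\<lambda>u. frechet_derivative F (at x) (frechet_derivative Z (at x) u)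
          + frechet_derivative (\<lambda>y. frechet_derivative F (at y) (Z x)) (at x) u)"
    if "Z differentiable (at x)" for Z
    by (rule frechet_derivative_at[symmetric,
          OF has_derivative_frechet_pairing[OF F x frechet_derivative_works[THEN iffD1, OF that]]])
  show ?thesis
    unfolding D[OF XY(1)] D[OF XY(2)] lie_def
    using frechet_derivative_second_symmetric[OF F x, of "X x" "Y x"]
    by (simp add: linear_diff[OF smooth_on_linear_frechet_derivative[OF F x]])
qed

lemma inner_lie_eq_neg_dalpha:
  fixes A X Y :: "real^3 \<Rightarrow> real^3"
  assumes Q: "open Q" "x \<in> Q"
    and A: "A differentiable (at x)" and XY: "X differentiable (at x)" "Y differentiable (at x)"
    and const: "\<forall>y\<in>Q. A y \<bullet> X y = a" "\<forall>y\<in>Q. A y \<bullet> Y y = b"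
  shows "A x \<bullet> lie X Y x = - dalpha A x (X x) (Y x)"
proof -
  have pairing: "A x \<bullet> frechet_derivative Z (at x) h = - (frechet_derivative A (at x) h \<bullet> Z x)"
    if Z: "Z differentiable (at x)" "\<forall>y\<in>Q. A y \<bullet> Z y = c" for Z :: "real^3 \<Rightarrow> real^3" and c h
  proof -
    have "((\<lambda>y. A y \<bullet> Z y) has_derivative
      (\<lambda>h. A x \<bullet> frechet_derivative Z (at x) h + frechet_derivative A (at x) h \<bullet> Z x)) (at x)"
      using has_derivative_inner[OF A[unfolded frechet_derivative_works] Z(1)[unfolded frechet_derivative_works]] .
    moreover have "((\<lambda>y. A y \<bullet> Z y) has_derivative (\<lambda>_. 0)) (at x)"
      by (rule has_derivative_transform_within_open[OF _ Q, of "\<lambda>_. c"]) (use Z(2) in simp_all)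
    ultimately have "(\<lambda>h. A x \<bullet> frechet_derivative Z (at x) h + frechet_derivative A (at x) h \<bullet> Z x)
        = (\<lambda>_. 0)"
      by (rule has_derivative_unique)
    from fun_cong[OF this, of h] show ?thesis by linarith
  qed
  show ?thesis
    unfolding lie_def dalpha_def inner_diff_right
    using pairing[OF XY(1) const(1)] pairing[OF XY(2) const(2)] by simp
qed

lemma has_deriv_along_if_eq_on:
  fixes f g :: "real^3 \<Rightarrow> real"
  assumes f: "(f has_derivative f') (at x)" and Q: "open Q" "x \<in> Q"
    and eq: "\<forall>y\<in>N \<inter> Q. g y = f y"
  shows "has_deriv_along N g x w (f' w)"
  unfolding has_deriv_along_def
proof (intro allI impI, elim conjE)
  fix \<gamma> :: "real \<Rightarrow> real^3" and e :: real
  assume e: "e > 0" and \<gamma>: "\<gamma> 0 = x" "\<forall>t\<in>{-e<..<e}. \<gamma> t \<in> N" "(\<gamma> has_vector_derivative w) (at 0)"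
  obtain r where r: "r > 0" "ball x r \<subseteq> Q" using Q open_contains_ball by blast
  obtain d where d: "d > 0" "\<forall>t. dist t 0 < d \<longrightarrow> dist (\<gamma> t) (\<gamma> 0) < r"
    using has_vector_derivative_continuous[OF \<gamma>(3)] r(1) unfolding continuous_at_eps_delta by blast
  have agree: "(\<lambda>t. f (\<gamma> t)) t = (g \<circ> \<gamma>) t" if "t \<in> ball 0 (min d e)" for t
  proof -
    have "\<gamma> t \<in> ball x r" using d(2) that \<gamma>(1) by (auto simp: dist_commute)
    then have "\<gamma> t \<in> Q" using r(2) by blast
    moreover have "\<gamma> t \<in> N" using \<gamma>(2) that by (auto simp: dist_real_def abs_less_iff)
    ultimately show ?thesis using eq by simp
  qed
  have "((\<lambda>t. f (\<gamma> t)) has_derivative (\<lambda>h. f' (h *\<^sub>R w))) (at 0)"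
    using has_derivative_compose[OF \<gamma>(3)[unfolded has_vector_derivative_def]] f \<gamma>(1) by simp
  moreover have "(\<lambda>h. f' (h *\<^sub>R w)) = (*) (f' w)"
    using linear_scale[OF has_derivative_linear[OF f]] by (auto simp: fun_eq_iff)
  ultimately have "((\<lambda>t. f (\<gamma> t)) has_derivative (*) (f' w)) (at 0)" by simp
  then have "((g \<circ> \<gamma>) has_derivative (*) (f' w)) (at 0)"
    by (rule has_derivative_transform_within_open[OF _ open_ball[of 0 "min d e"] _ agree])
      (use d(1) e in simp_all)
  then show "((g \<circ> \<gamma>) has_real_derivative f' w) (at 0)"
    by (simp add: has_field_derivative_def)
qed

lemma has_deriv_along_unique:
  assumes "has_deriv_along N g x w d" "has_deriv_along N g x w d'" "w \<in> tangent_space N x"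
  shows "d = d'"
proof -
  obtain \<gamma> e where "e > 0" "\<gamma> 0 = x" "\<forall>t\<in>{-e<..<e}. \<gamma> t \<in> N" "(\<gamma> has_vector_derivative w) (at 0)"
    using assms(3) unfolding tangent_space_def by blast
  then show ?thesis
    using assms(1,2) DERIV_unique unfolding has_deriv_along_def by blast
qed

lemma deriv_along_eqI:
  fixes f g :: "real^3 \<Rightarrow> real"
  assumes "(f has_derivative f') (at x)" "open Q" "x \<in> Q" "\<forall>y\<in>N \<inter> Q. g y = f y"
    and w: "w \<in> tangent_space N x"
  shows "deriv_along N g x w = f' w"
  unfolding deriv_along_def
  using has_deriv_along_if_eq_on[OF assms(1-4)] has_deriv_along_unique[OF _ _ w]
  by blast

lemma has_derivative_vanishes_on_tangent_space:
  fixes f :: "real^3 \<Rightarrow> real"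
  assumes f: "(f has_derivative f') (at x)" and Q: "open Q" "x \<in> Q"
    and zero: "\<forall>y\<in>N \<inter> Q. f y = 0" and w: "w \<in> tangent_space N x"
  shows "f' w = 0"
proof -
  have "has_deriv_along N f x w (f' w)"
    using has_deriv_along_if_eq_on[OF f Q] by simp
  moreover have "has_deriv_along N f x w 0"
    using has_deriv_along_if_eq_on[of "\<lambda>_. 0" "\<lambda>_. 0", OF _ Q] zero by simp
  ultimately show ?thesis using has_deriv_along_unique[OF _ _ w] by blast
qed

lemma straightening_map_has_derivative:
  fixes F :: "real^3 \<Rightarrow> real"
  assumes F: "smooth_on W F" "open W" and lin: "linear \<phi>"
  obtains D where
    "\<And>z. z \<in> W \<Longrightarrow> ((\<lambda>z. z + (F z - \<phi> (z - y)) *\<^sub>R m) has_derivative blinfun_apply (D z)) (at z)"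
    "continuous_on W D"
    "\<And>z. z \<in> W \<Longrightarrow> blinfun_apply (D z) = (\<lambda>h. h + (frechet_derivative F (at z) h - \<phi> h) *\<^sub>R m)"
proof
  define D where "D = (\<lambda>z h. h + (frechet_derivative F (at z) h - \<phi> h) *\<^sub>R m)"
  have "bounded_linear (D z)" if "z \<in> W" for z
    using smooth_on_linear_frechet_derivative[OF F that] lin
    by (auto simp: D_def linear_conv_bounded_linear[symmetric] linear_add linear_scale algebra_simps
        intro!: linearI)
  then show D: "blinfun_apply (Blinfun (D z)) = D z" if "z \<in> W" for z
    using that bounded_linear_Blinfun_apply by blast
  show "((\<lambda>z. z + (F z - \<phi> (z - y)) *\<^sub>R m) has_derivative blinfun_apply (Blinfun (D z))) (at z)"
    if "z \<in> W" for z
  proof -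
    have "((\<lambda>z. \<phi> (z - y)) has_derivative \<phi>) (at z)"
      using bounded_linear.has_derivative[OF linear_conv_bounded_linear[THEN iffD1, OF lin]
          has_derivative_diff[OF has_derivative_ident has_derivative_const]] by simp
    then have "((\<lambda>z. z + (F z - \<phi> (z - y)) *\<^sub>R m) has_derivative D z) (at z)"
      unfolding D_def
      by (intro has_derivative_add has_derivative_ident has_derivative_scaleR_left has_derivative_diff
          smooth_on_has_derivative[OF F that])
    then show ?thesis unfolding D[OF that] .
  qed
  show "continuous_on W (\<lambda>z. Blinfun (D z))"
  proof (rule continuous_on_blinfun_componentwise)
    fix i :: "real^3"
    have "continuous_on W (\<lambda>z. frechet_derivative F (at z) i)"
      by (intro smooth_on_continuous_on smooth_on_frechet_derivative F)
    then have "continuous_on W (\<lambda>z. D z i)"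
      unfolding D_def by (intro continuous_intros)
    then show "continuous_on W (\<lambda>z. blinfun_apply (Blinfun (D z)) i)"
      by (rule continuous_on_cong[THEN iffD1, rotated 2]) (simp_all add: D)
  qed
qed

text \<open>The chart is the local inverse of \<open>\<Phi> z = z + (F z - dF\<^sub>y(z - y)) m\<close>, where \<open>dF\<^sub>y m = 1\<close>;
  the derivative of \<open>\<Phi>\<close> at \<open>y\<close> is the identity.\<close>
lemma level_function_linearizing_chart:
  fixes F :: "real^3 \<Rightarrow> real"
  assumes F: "smooth_on W F" "open W" and y: "y \<in> W" "F y = 0"
    and nz: "frechet_derivative F (at y) \<noteq> (\<lambda>_. 0)"
  obtains V g where "open V" "y \<in> V" "\<forall>w\<in>V. g w \<in> W \<and> F (g w) = frechet_derivative F (at y) (w - y)"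
    "g y = y" "(g has_derivative id) (at y)"
proof -
  define \<phi> where "\<phi> = frechet_derivative F (at y)"
  have lin: "linear \<phi>" unfolding \<phi>_def using smooth_on_linear_frechet_derivative[OF F y(1)] .
  obtain b where b: "\<phi> b \<noteq> 0" using nz unfolding \<phi>_def by auto
  define m where "m = (1 / \<phi> b) *\<^sub>R b"
  have m: "\<phi> m = 1" using b linear_scale[OF lin] by (simp add: m_def)
  define \<Phi> where "\<Phi> = (\<lambda>z. z + (F z - \<phi> (z - y)) *\<^sub>R m)"
  obtain D where D: "\<And>z. z \<in> W \<Longrightarrow> (\<Phi> has_derivative blinfun_apply (D z)) (at z)" "continuous_on W D"
    and D_apply: "\<And>z. z \<in> W \<Longrightarrow> blinfun_apply (D z) = (\<lambda>h. h + (frechet_derivative F (at z) h - \<phi> h) *\<^sub>R m)"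
    using straightening_map_has_derivative[OF F lin, of y m] unfolding \<Phi>_def by blast
  have Dy: "blinfun_apply (D y) = id" using D_apply[OF y(1)] by (simp add: \<phi>_def fun_eq_iff)
  have "id_blinfun o\<^sub>L D y = id_blinfun" using Dy by (intro blinfun_eqI) simp
  then obtain U' V g g' where ift: "open U'" "U' \<subseteq> W" "y \<in> U'" "open V" "\<Phi> y \<in> V"
    "homeomorphism U' V \<Phi> g" "\<And>w. w \<in> V \<Longrightarrow> (g has_derivative g' w) (at w)"
    "\<And>w. w \<in> V \<Longrightarrow> g' w = inv (blinfun_apply (D (g w)))"
    using inverse_function_theorem[OF F(2) D y(1)] by metis
  have \<Phi>y: "\<Phi> y = y" using y(2) by (simp add: \<Phi>_def linear_0[OF lin])
  have gy: "g y = y" using ift(3,6) \<Phi>y unfolding homeomorphism_def by force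
  have F\<Phi>: "F z = \<phi> (\<Phi> z - y)" for z
    unfolding \<Phi>_def using m by (simp add: linear_add[OF lin] linear_diff[OF lin] linear_scale[OF lin])
  have "g w \<in> W \<and> F (g w) = \<phi> (w - y)" if "w \<in> V" for w
    using ift(2,6) that F\<Phi>[of "g w"] unfolding homeomorphism_def by auto
  moreover have "(g has_derivative id) (at y)"
    using ift(7,8)[of y] ift(5) \<Phi>y gy Dy by simp
  ultimately show ?thesis using that ift(4,5) \<Phi>y gy unfolding \<phi>_def by auto
qed

lemma kernel_subset_tangent_space:
  fixes F :: "real^3 \<Rightarrow> real"
  assumes F: "smooth_on W F" "open W" and y: "y \<in> W" "F y = 0"
    and nz: "frechet_derivative F (at y) \<noteq> (\<lambda>_. 0)"
    and N: "N \<inter> W = {x\<in>W. F x = 0}"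
    and v: "frechet_derivative F (at y) v = 0"
  shows "v \<in> tangent_space N y"
proof -
  obtain V g where V: "open V" "y \<in> V" and g: "\<forall>w\<in>V. g w \<in> W \<and> F (g w) = frechet_derivative F (at y) (w - y)"
    and gy: "g y = y" and dg: "(g has_derivative id) (at y)"
    using level_function_linearizing_chart[OF F y nz] by blast
  obtain r where r: "r > 0" "ball y r \<subseteq> V" using V open_contains_ball by blast
  have nv: "norm v + 1 > 0" by (simp add: add_nonneg_pos)
  define e where "e = r / (norm v + 1)"
  have e: "e > 0" using r nv by (simp add: e_def)
  define \<gamma> where "\<gamma> = (\<lambda>t. g (y + t *\<^sub>R v))"
  have "\<gamma> 0 = y" using gy by (simp add: \<gamma>_def)
  moreover have "\<gamma> t \<in> N" if "t \<in> {-e<..<e}" for t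
  proof -
    have "norm (t *\<^sub>R v) \<le> e * norm v" using that by (auto intro: mult_right_mono)
    also have "\<dots> < e * (norm v + 1)" using e by simp
    also have "\<dots> = r" using nv by (simp add: e_def)
    finally have "y + t *\<^sub>R v \<in> V" using r(2) by (auto simp: dist_norm)
    then show ?thesis
      using g v N linear_scale[OF smooth_on_linear_frechet_derivative[OF F y(1)]]
      unfolding \<gamma>_def by auto
  qed
  moreover have "((\<lambda>t. y + t *\<^sub>R v) has_derivative (\<lambda>h. h *\<^sub>R v)) (at 0)"
    by (auto intro!: derivative_eq_intros)
  from has_derivative_compose[OF this, of g id] dg
  have "(\<gamma> has_vector_derivative v) (at 0)"
    by (simp add: \<gamma>_def has_vector_derivative_def)
  ultimately show ?thesis unfolding tangent_space_def using e by blast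
qed

lemma tangent_space_level_set:
  fixes F :: "real^3 \<Rightarrow> real"
  assumes F: "smooth_on W F" "open W" "\<forall>x\<in>W. frechet_derivative F (at x) \<noteq> (\<lambda>_. 0)"
    and N: "N \<inter> W = {x\<in>W. F x = 0}" and y: "y \<in> N \<inter> W"
  shows "tangent_space N y = {v. frechet_derivative F (at y) v = 0}"
proof (intro set_eqI iffI; simp)
  show "frechet_derivative F (at y) v = 0" if "v \<in> tangent_space N y" for v
    using has_derivative_vanishes_on_tangent_space[OF smooth_on_has_derivative[OF F(1,2)] F(2) _ _ that]
      N y by auto
  show "v \<in> tangent_space N y" if "frechet_derivative F (at y) v = 0" for v
    using kernel_subset_tangent_space[OF F(1,2) _ _ _ N that] N y F(3) by auto
qed

lemma kernel_eq_hyperplane: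
  fixes \<phi> :: "'a::real_inner \<Rightarrow> real"
  assumes lin: "linear \<phi>" and a: "a \<noteq> 0" and nz: "\<phi> \<noteq> (\<lambda>_. 0)"
    and sub: "{w. a \<bullet> w = 0} \<subseteq> {w. \<phi> w = 0}"
  shows "{w. \<phi> w = 0} = {w. a \<bullet> w = 0}"
proof -
  have proj: "\<phi> u = (a \<bullet> u / (a \<bullet> a)) * \<phi> a" for u
  proof -
    have "a \<bullet> (u - (a \<bullet> u / (a \<bullet> a)) *\<^sub>R a) = 0" using a by (simp add: inner_diff_right)
    then have "\<phi> (u - (a \<bullet> u / (a \<bullet> a)) *\<^sub>R a) = 0" using sub by blast
    then show ?thesis by (simp add: linear_diff[OF lin] linear_scale[OF lin])
  qed
  have "\<phi> a \<noteq> 0"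
  proof
    assume "\<phi> a = 0"
    then have "\<phi> u = 0" for u using proj[of u] by simp
    then show False using nz by auto
  qed
  then have "\<phi> w = 0 \<Longrightarrow> a \<bullet> w = 0" for w using proj[of w] a by simp
  then show ?thesis using sub by blast
qed

lemma distr_subset_span:
  assumes Ax: "A x \<noteq> 0" and u: "u1 \<in> distr A x" "u2 \<in> distr A x"
    and lA: "linear (frechet_derivative A (at x))"
    and d: "dalpha A x u1 u2 \<noteq> 0"
  shows "distr A x \<subseteq> span {u1, u2}"
proof -
  have ne: "u1 \<noteq> u2" using d by (auto simp: dalpha_def inner_commute)
  have u2: "u2 \<noteq> 0" using d by (auto simp: dalpha_def linear_0[OF lA])
  have "u1 \<notin> span {u2}"
  proof
    assume "u1 \<in> span {u2}"
    then obtain k where "u1 = k *\<^sub>R u2" by (auto simp: span_singleton)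
    then have "dalpha A x u1 u2 = 0" by (simp add: dalpha_def linear_scale[OF lA] inner_commute)
    then show False using d by simp
  qed
  then have "independent {u1, u2}" using ne u2 by (simp add: independent_insert)
  moreover have "card {u1, u2} = dim (distr A x)"
    using ne dim_hyperplane[OF Ax] by (simp add: distr_def)
  ultimately show ?thesis using card_eq_dim[of "{u1, u2}" "distr A x"] u by simp
qed

text \<open>Since \<open>d\<alpha>\<close> is nondegenerate on \<open>\<Delta>\<close>, a linear form vanishing on a frame of \<open>\<Delta>\<close> would have
  \<open>\<Delta>\<close> as its kernel.\<close>
lemma distr_frame_not_in_kernel:
  fixes \<phi> :: "real^3 \<Rightarrow> real"
  assumes Ax: "A x \<noteq> 0" "linear (frechet_derivative A (at x))"
    and u: "u1 \<in> distr A x" "u2 \<in> distr A x" "dalpha A x u1 u2 \<noteq> 0"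
    and \<phi>: "linear \<phi>" "\<phi> \<noteq> (\<lambda>_. 0)" "{w. \<phi> w = 0} \<noteq> distr A x"
    and u1: "\<phi> u1 = 0"
  shows "\<phi> u2 \<noteq> 0"
proof
  assume "\<phi> u2 = 0"
  then have "\<phi> w = 0" if "w \<in> distr A x" for w
    using linear_eq_0_on_span[OF \<phi>(1), of "{u1, u2}"] distr_subset_span[OF Ax(1) u(1,2) Ax(2) u(3)]
      that u1 by blast
  then have "{w. \<phi> w = 0} = distr A x"
    using kernel_eq_hyperplane[OF \<phi>(1) Ax(1) \<phi>(2)] unfolding distr_def by blast
  then show False using \<phi>(3) by blast
qed

lemma DOT_eq_quotient:
  assumes T: "tangent_space N y = {w. \<phi> w = 0}" and lin: "linear \<phi>" and v2: "\<phi> (v2 y) \<noteq> 0"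
  shows "DOT N v0 v2 y = \<phi> (v0 y) / \<phi> (v2 y)"
  unfolding DOT_def
proof (rule the_equality)
  have ev: "\<phi> (v0 y - b *\<^sub>R v2 y) = \<phi> (v0 y) - b * \<phi> (v2 y)" for b
    by (simp add: linear_diff[OF lin] linear_scale[OF lin])
  show "v0 y - (\<phi> (v0 y) / \<phi> (v2 y)) *\<^sub>R v2 y \<in> tangent_space N y"
    unfolding T using ev v2 by simp
  show "b = \<phi> (v0 y) / \<phi> (v2 y)" if "v0 y - b *\<^sub>R v2 y \<in> tangent_space N y" for b
    using that unfolding T using ev v2 by (simp add: field_simps)
qed

lemma DOT_eq_quotient_near:
  fixes F :: "real^3 \<Rightarrow> real"
  assumes F: "smooth_on W F" "open W" "\<forall>y\<in>W. frechet_derivative F (at y) \<noteq> (\<lambda>_. 0)"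
    and N: "N \<inter> W = {y\<in>W. F y = 0}" and x: "x \<in> W"
    and v2: "continuous (at x) (\<lambda>y. frechet_derivative F (at y) (v2 y))"
      "frechet_derivative F (at x) (v2 x) \<noteq> 0"
  obtains Q where "open Q" "x \<in> Q"
    "\<forall>y\<in>N \<inter> Q. DOT N v0 v2 y = frechet_derivative F (at y) (v0 y) / frechet_derivative F (at y) (v2 y)"
proof -
  obtain r where r: "r > 0" "\<forall>y. dist x y < r \<longrightarrow> frechet_derivative F (at y) (v2 y) \<noteq> 0"
    using continuous_at_avoid[OF v2] by blast
  show ?thesis
  proof (rule that[of "W \<inter> ball x r"])
    show "open (W \<inter> ball x r)" "x \<in> W \<inter> ball x r" using F(2) x r(1) by auto
    show "\<forall>y\<in>N \<inter> (W \<inter> ball x r).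
        DOT N v0 v2 y = frechet_derivative F (at y) (v0 y) / frechet_derivative F (at y) (v2 y)"
      using DOT_eq_quotient[OF tangent_space_level_set[OF F N] smooth_on_linear_frechet_derivative[OF F(1,2)]] r(2)
      by auto
  qed
qed

lemma COT_eq_bracket_pairing:
  fixes F :: "real^3 \<Rightarrow> real" and v0 v1 v2 :: "real^3 \<Rightarrow> real^3"
  assumes F: "smooth_on W F" "open W" "\<forall>y\<in>W. frechet_derivative F (at y) \<noteq> (\<lambda>_. 0)"
    and N: "N \<inter> W = {y\<in>W. F y = 0}" and x: "x \<in> N \<inter> W"
    and v: "v0 differentiable (at x)" "v1 differentiable (at x)" "v2 differentiable (at x)"
    and Q: "open Q" "x \<in> Q" and v1: "\<forall>y\<in>N \<inter> Q. v1 y \<in> tangent_space N y"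
    and v2: "frechet_derivative F (at x) (v2 x) \<noteq> 0"
  shows "COT N v0 v1 v2 x
    = (frechet_derivative F (at x) (lie v1 v0 x)
        - DOT N v0 v2 x * frechet_derivative F (at x) (lie v1 v2 x)) / frechet_derivative F (at x) (v2 x)
      - (DOT N v0 v2 x)\<^sup>2"
proof -
  define P where "P = (\<lambda>Z y. frechet_derivative F (at y) (Z y))"
  define D where "D = (\<lambda>Z. frechet_derivative (P Z) (at x))"
  have xW: "x \<in> W" using x by blast
  have dP: "(P Z has_derivative D Z) (at x)" if "Z differentiable (at x)" for Z
    using frechet_pairing_differentiable[OF F(1,2) xW that] frechet_derivative_works
    unfolding P_def D_def by blast
  have lie: "D Y (X x) - D X (Y x) = frechet_derivative F (at x) (lie X Y x)"
    if "X differentiable (at x)" "Y differentiable (at x)" for X Y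
    using frechet_pairing_lie[OF F(1,2) xW that] unfolding D_def P_def .
  have T: "tangent_space N y = {w. frechet_derivative F (at y) w = 0}" if "y \<in> N \<inter> W" for y
    using tangent_space_level_set[OF F N that] .
  have lin: "linear (frechet_derivative F (at y))" if "y \<in> W" for y
    using smooth_on_linear_frechet_derivative[OF F(1,2) that] .
  have P2: "P v2 x \<noteq> 0" using v2 unfolding P_def .
  obtain Q' where Q': "open Q'" "x \<in> Q'" and DOT: "\<forall>y\<in>N \<inter> Q'. DOT N v0 v2 y = P v0 y / P v2 y"
    using DOT_eq_quotient_near[OF F N xW has_derivative_continuous[OF dP[OF v(3)], unfolded P_def]] P2
    unfolding P_def by blast
  define a where "a = P v0 x / P v2 x"
  have v1x: "v1 x \<in> tangent_space N x" using v1 x Q(2) by blast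
  have "deriv_along N (DOT N v0 v2) x (v1 x)
      = - P v0 x * (inverse (P v2 x) * D v2 (v1 x) * inverse (P v2 x)) + D v0 (v1 x) / P v2 x"
    using deriv_along_eqI[OF has_derivative_divide[OF dP[OF v(1)] dP[OF v(3)] P2] Q' DOT v1x]
    by simp
  also have "\<dots> = (D v0 (v1 x) - a * D v2 (v1 x)) / P v2 x"
    using P2 by (simp add: a_def field_simps)
  moreover have DOTx: "DOT N v0 v2 x = a" using DOT x Q'(2) unfolding a_def by blast
  ultimately have COT: "COT N v0 v1 v2 x = (D v0 (v1 x) - a * D v2 (v1 x)) / P v2 x - a\<^sup>2"
    unfolding COT_def by simp
  have "v0 x - a *\<^sub>R v2 x \<in> tangent_space N x"
    using T[OF x] P2 by (simp add: a_def P_def linear_diff[OF lin[OF xW]] linear_scale[OF lin[OF xW]])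
  moreover have "\<forall>y\<in>N \<inter> (W \<inter> Q). P v1 y = 0" using T v1 unfolding P_def by blast
  ultimately have "D v1 (v0 x - a *\<^sub>R v2 x) = 0"
    using has_derivative_vanishes_on_tangent_space[OF dP[OF v(2)]] F(2) Q xW by blast
  then have "D v1 (v0 x) = a * D v1 (v2 x)"
    using has_derivative_linear[OF dP[OF v(2)]] by (simp add: linear_diff linear_scale)
  then have "D v0 (v1 x) - a * D v2 (v1 x)
      = frechet_derivative F (at x) (lie v1 v0 x) - a * frechet_derivative F (at x) (lie v1 v2 x)"
    using lie[OF v(2,1)] lie[OF v(2,3)] by (simp add: algebra_simps)
  then show ?thesis using COT unfolding DOTx P_def by simp
qed

text \<open>The \<open>v\<^sub>0\<close>-components of the brackets are \<open>\<alpha>\<^sub>0([v\<^sub>i,v\<^sub>j]) = -d\<alpha>\<^sub>0(v\<^sub>i,v\<^sub>j)\<close>, so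
  \<open>c 0 1 0 x = 0\<close> and \<open>c 1 2 0 x = -1\<close>.\<close>
lemma reeb_frame_brackets:
  assumes A: "contact_form U A" and v0: "reeb U A v0" and frame: "adapted_frame U A g N V v1 v2"
    and c: "\<forall>x\<in>V. \<forall>i\<in>{0..2}. \<forall>j\<in>{0..2}.
           lie ([v0, v1, v2] ! i) ([v0, v1, v2] ! j) x
             = (\<Sum>k\<in>{0..2}. c i j k x *\<^sub>R ([v0, v1, v2] ! k) x)"
    and x: "x \<in> V"
  shows "lie v1 v0 x = - (c 0 1 1 x *\<^sub>R v1 x + c 0 1 2 x *\<^sub>R v2 x)"
    and "lie v1 v2 x = - v0 x + c 1 2 1 x *\<^sub>R v1 x + c 1 2 2 x *\<^sub>R v2 x"
proof -
  have U: "open U" "smooth_on U A" and v0U: "smooth_on U v0"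
    and v0: "\<forall>y\<in>U. A y \<bullet> v0 y = 1" "\<forall>y\<in>U. \<forall>w. dalpha A y (v0 y) w = 0"
    using A v0 unfolding contact_form_def reeb_def by auto
  have V: "open V" "V \<subseteq> U" "smooth_on V v1" "smooth_on V v2"
    and fr: "\<forall>y\<in>V. A y \<bullet> v1 y = 0 \<and> A y \<bullet> v2 y = 0 \<and> dalpha A y (v1 y) (v2 y) = 1"
    using frame unfolding adapted_frame_def distr_def by auto
  have xU: "x \<in> U" using x V(2) by blast
  have d: "A differentiable (at x)" "v0 differentiable (at x)"
    "v1 differentiable (at x)" "v2 differentiable (at x)"
    using smooth_on_differentiable_at U V v0U x xU by auto
  have sum3: "(\<Sum>k\<in>{0..2::nat}. f k) = f 0 + f 1 + (f 2 :: real^3)" for f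
    by (simp add: numeral_2_eq_2)
  have cx: "lie ([v0, v1, v2] ! i) ([v0, v1, v2] ! j) x
      = (\<Sum>k\<in>{0..2}. c i j k x *\<^sub>R ([v0, v1, v2] ! k) x)" if "i \<le> 2" "j \<le> 2" for i j
    using c x that by auto
  have 01: "lie v0 v1 x = c 0 1 0 x *\<^sub>R v0 x + c 0 1 1 x *\<^sub>R v1 x + c 0 1 2 x *\<^sub>R v2 x"
    using cx[of 0 1] by (simp add: sum3)
  have 12: "lie v1 v2 x = c 1 2 0 x *\<^sub>R v0 x + c 1 2 1 x *\<^sub>R v1 x + c 1 2 2 x *\<^sub>R v2 x"
    using cx[of 1 2] by (simp add: sum3)
  have "A x \<bullet> lie v0 v1 x = - dalpha A x (v0 x) (v1 x)"
    using fr v0(1) V(2) by (intro inner_lie_eq_neg_dalpha[OF V(1) x d(1,2,3)]) auto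
  then have "c 0 1 0 x = 0" using 01 fr v0 x xU by (simp add: inner_add_right)
  moreover have "lie v1 v0 x = - lie v0 v1 x" by (simp add: lie_def)
  ultimately show "lie v1 v0 x = - (c 0 1 1 x *\<^sub>R v1 x + c 0 1 2 x *\<^sub>R v2 x)"
    using 01 by simp
  have "A x \<bullet> lie v1 v2 x = - dalpha A x (v1 x) (v2 x)"
    using fr by (intro inner_lie_eq_neg_dalpha[OF V(1) x d(1,3,4)]) auto
  then have "c 1 2 0 x = -1" using 12 fr v0 x xU by (simp add: inner_add_right)
  then show "lie v1 v2 x = - v0 x + c 1 2 1 x *\<^sub>R v1 x + c 1 2 2 x *\<^sub>R v2 x"
    using 12 by simp
qed

lemma adapted_frame_transversal:
  fixes \<phi> :: "real^3 \<Rightarrow> real"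
  assumes A: "contact_form U A" and frame: "adapted_frame U A g N V v1 v2"
    and x: "x \<in> N \<inter> V" "regular_pt A N x"
    and \<phi>: "linear \<phi>" "\<phi> \<noteq> (\<lambda>_. 0)" and T: "tangent_space N x = {w. \<phi> w = 0}"
  shows "\<phi> (v1 x) = 0" and "\<phi> (v2 x) \<noteq> 0"
proof -
  have U: "open U" "smooth_on U A" "x \<in> U" "A x \<noteq> 0"
    and fr: "v1 x \<in> distr A x" "v2 x \<in> distr A x" "dalpha A x (v1 x) (v2 x) = 1"
    and v1: "v1 x \<in> tangent_space N x"
    using A frame x unfolding contact_form_def adapted_frame_def by auto
  show v1x: "\<phi> (v1 x) = 0" using v1 T by blast
  show "\<phi> (v2 x) \<noteq> 0"
    using distr_frame_not_in_kernel[OF U(4) smooth_on_linear_frechet_derivative[OF U(2,1,3)] fr(1,2)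
        _ \<phi> _ v1x] fr(3) x(2) T unfolding regular_pt_def by auto
qed

theorem mainTheorem5:
  fixes U N V :: "(real^3) set"
    and A v0 v1 v2 :: "real^3 \<Rightarrow> real^3"
    and g :: "real^3 \<Rightarrow> real^3 \<Rightarrow> real^3 \<Rightarrow> real"
    and c :: "nat \<Rightarrow> nat \<Rightarrow> nat \<Rightarrow> real^3 \<Rightarrow> real"
  assumes "contact_form U A"
    and "sr_metric U A g"
    and "normalized U A g"
    and "reeb U A v0"
    and "surface U N"
    and "adapted_frame U A g N V v1 v2"
    and "\<forall>x\<in>V. \<forall>i\<in>{0..2}. \<forall>j\<in>{0..2}.
           lie ([v0, v1, v2] ! i) ([v0, v1, v2] ! j) x
             = (\<Sum>k\<in>{0..2}. c i j k x *\<^sub>R ([v0, v1, v2] ! k) x)"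
  shows "\<forall>x\<in>N \<inter> V. regular_pt A N x \<longrightarrow>
           COT N v0 v1 v2 x = - c 0 1 2 x - DOT N v0 v2 x * c 1 2 2 x"
proof (intro ballI impI)
  fix x assume x: "x \<in> N \<inter> V" and reg: "regular_pt A N x"
  obtain W and F :: "real^3 \<Rightarrow> real" where F: "open W" "x \<in> W" "smooth_on W F"
    "\<forall>y\<in>W. frechet_derivative F (at y) \<noteq> (\<lambda>_. 0)" "N \<inter> W = {y\<in>W. F y = 0}"
    using assms(5) x unfolding surface_def by blast
  define \<phi> where "\<phi> = frechet_derivative F (at x)"
  have T: "tangent_space N x = {w. \<phi> w = 0}"
    unfolding \<phi>_def using tangent_space_level_set[OF F(3,1,4,5)] x F(2) by blast
  have lin: "linear \<phi>" unfolding \<phi>_def using smooth_on_linear_frechet_derivative[OF F(3,1,2)] .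
  have v1: "\<phi> (v1 x) = 0" and v2: "\<phi> (v2 x) \<noteq> 0"
    using adapted_frame_transversal[OF assms(1,6) x reg lin _ T] F(2,4) unfolding \<phi>_def by auto
  have "v0 differentiable (at x)" "v1 differentiable (at x)" "v2 differentiable (at x)"
    and "open V" "\<forall>y\<in>N \<inter> V. v1 y \<in> tangent_space N y"
    using assms(1,4,6) x
    by (auto simp: contact_form_def reeb_def adapted_frame_def intro: smooth_on_differentiable_at)
  then have "COT N v0 v1 v2 x
      = (\<phi> (lie v1 v0 x) - DOT N v0 v2 x * \<phi> (lie v1 v2 x)) / \<phi> (v2 x) - (DOT N v0 v2 x)\<^sup>2"
    using COT_eq_bracket_pairing[OF F(3,1,4,5)] x F(2) v2 unfolding \<phi>_def by blast
  also have "\<dots> = - c 0 1 2 x - DOT N v0 v2 x * c 1 2 2 x"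
  proof -
    note brackets = reeb_frame_brackets[OF assms(1,4,6,7) IntD2[OF x]]
    have l10: "\<phi> (lie v1 v0 x) = - c 0 1 2 x * \<phi> (v2 x)"
      unfolding brackets using v1 by (simp add: linear_diff[OF lin] linear_neg[OF lin] linear_scale[OF lin])
    have l12: "\<phi> (lie v1 v2 x) = (c 1 2 2 x - DOT N v0 v2 x) * \<phi> (v2 x)"
      unfolding brackets DOT_eq_quotient[of N x \<phi> v2 v0, OF T lin v2] using v1 v2
      by (simp add: linear_add[OF lin] linear_diff[OF lin] linear_neg[OF lin] linear_scale[OF lin] field_simps)
    show ?thesis unfolding l10 l12 using v2 by (simp add: field_simps power2_eq_square)
  qed
  finally show "COT N v0 v1 v2 x = - c 0 1 2 x - DOT N v0 v2 x * c 1 2 2 x" .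
qed

end
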